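(* Let $k$ be a positive integer and let $w=A_1A_2\ldots A_n$ be a nonempty word over $\mathcal{A}_k$ (with $A_i\in\mathcal{A}_k$). Let $I_w:=A_1\oplus A_2\oplus\cdots\oplus A_n\in\mathcal{I}_k$. Then $[\![ I_w]\!]=A_1\boxplus A_2\boxplus\cdots\boxplus A_n$.
   Context: A $k$-interface graph is a tuple $(G,\phi,L,R)$ with $G$ a finite simple graph, $L,R\subseteq V(G)$, and $\phi:V(G)\to\{1,\dots,k\}$ injective on $L$ and on $R$. Two $k$-interface graphs $(G_1,\phi_1,L_1,R_1)$, $(G_2,\phi_2,L_2,R_2)$ are compatible if, with $J=\phi_1(R_1)\cap\phi_2(L_2)$, we have $V(G_1)\cap V(G_2)=\phi_1^{-1}(J)\cap R_1=\phi_2^{-1}(J)\cap L_2$ and $\phi_1,\phi_2$ agree on $V(G_1)\cap V(G_2)$ (no condition on edges). Their gluing is $(G_1\cup G_2,\phi,L_1,R_2)$ where $\phi$ extends $\phi_1$ and $\phi_2$ and $G_1\cup G_2=(V_1\cup V_2,E_1\cup E_2)$. Isomorphism of $k$-interface graphs is a graph isomorphism preserving labels $\phi$ and membership in $L$ and in $R$. $\mathcal{I}_k$ is the set of isomorphism classes; for $I_1,I_2\in\mathcal{I}_k$, $I_1\oplus I_2$ is the class of the gluing of compatible representatives of $I_1$ and $I_2$ (well defined), making $(\mathcal{I}_k,\oplus)$ a semigroup. The torso $\mathrm{torso}(G,X)$ is the graph on $X$ where distinct $x_1,x_2$ are adjacent iff $G$ has an $x_1$–$x_2$ path with no internal vertex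 in $X$. The abstraction $[\![\mathbb{G}]\!]$ of $\mathbb{G}=(G,\phi,L,R)$ is the isomorphism class of $(\mathrm{torso}(G,L\cup R),\phi|_{L\cup R},L,R)$; it depends only on the isomorphism class $I$ of $\mathbb{G}$, written $[\![ I]\!]$. $\mathcal{A}_k\subseteq\mathcal{I}_k$ is the set of all abstractions, and for $A_1,A_2\in\mathcal{A}_k$, $A_1\boxplus A_2:=[\![ A_1\oplus A_2]\!]$; $(\mathcal{A}_k,\boxplus)$ is a finite semigroup. *)

theory Defs
  imports Main
begin

text \<open>Vertices are taken from the countably infinite type nat,
  which suffices to represent every isomorphism class of finite graphs and to pick
  compatible representatives.\<close>

record 'v igraph =
  verts :: "'v set"
  edges :: "'v set set"
  lab   :: "'v \<Rightarrow> nat"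
  lft   :: "'v set"
  rgt   :: "'v set"

definition is_igraph :: "nat \<Rightarrow> 'v igraph \<Rightarrow> bool" where
  "is_igraph k G \<longleftrightarrow>
     finite (verts G) \<and>
     (\<forall>e\<in>edges G. \<exists>x y. x \<noteq> y \<and> e = {x, y} \<and> x \<in> verts G \<and> y \<in> verts G) \<and>
     lab G ` verts G \<subseteq> {1..k} \<and>
     lft G \<subseteq> verts G \<and> rgt G \<subseteq> verts G \<and>
     inj_on (lab G) (lft G) \<and> inj_on (lab G) (rgt G)"

definition iso_igraph :: "'v igraph \<Rightarrow> 'w igraph \<Rightarrow> bool" where
  "iso_igraph G H \<longleftrightarrow>
     (\<exists>f. bij_betw f (verts G) (verts H) \<and>
          (\<forall>x\<in>verts G. \<forall>y\<in>verts G. {x, y} \<in> edges G \<longleftrightarrow> {f x, f y} \<in> edges H) \<and>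
          (\<forall>x\<in>verts G. lab H (f x) = lab G x) \<and>
          f ` lft G = lft H \<and> f ` rgt G = rgt H)"

definition iclass :: "nat \<Rightarrow> nat igraph \<Rightarrow> nat igraph set" where
  "iclass k G = {H. is_igraph k H \<and> iso_igraph G H}"

definition Ik :: "nat \<Rightarrow> nat igraph set set" where
  "Ik k = {iclass k G | G. is_igraph k G}"

definition compatible :: "'v igraph \<Rightarrow> 'v igraph \<Rightarrow> bool" where
  "compatible G1 G2 \<longleftrightarrow>
     (let J = lab G1 ` rgt G1 \<inter> lab G2 ` lft G2 in
        verts G1 \<inter> verts G2 = {x\<in>rgt G1. lab G1 x \<in> J} \<and>
        verts G1 \<inter> verts G2 = {x\<in>lft G2. lab G2 x \<in> J} \<and>
        (\<forall>x\<in>verts G1 \<inter> verts G2. lab G1 x = lab G2 x))"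

definition glue :: "'v igraph \<Rightarrow> 'v igraph \<Rightarrow> 'v igraph" where
  "glue G1 G2 =
     \<lparr> verts = verts G1 \<union> verts G2,
       edges = edges G1 \<union> edges G2,
       lab = (\<lambda>x. if x \<in> verts G1 then lab G1 x else lab G2 x),
       lft = lft G1,
       rgt = rgt G2 \<rparr>"

text \<open>The semigroup operation on isomorphism classes (well defined per the paper).\<close>
definition oplus :: "nat \<Rightarrow> nat igraph set \<Rightarrow> nat igraph set \<Rightarrow> nat igraph set" where
  "oplus k I1 I2 =
     (THE I. \<exists>G1\<in>I1. \<exists>G2\<in>I2. compatible G1 G2 \<and> I = iclass k (glue G1 G2))"

definition is_path :: "'v igraph \<Rightarrow> 'v list \<Rightarrow> bool" where
  "is_path G ps \<longleftrightarrow> ps \<noteq> [] \<and> distinct ps \<and> set ps \<subseteq> verts G \<and>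
     (\<forall>i. Suc i < length ps \<longrightarrow> {ps ! i, ps ! Suc i} \<in> edges G)"

definition torso_edges :: "'v igraph \<Rightarrow> 'v set \<Rightarrow> 'v set set" where
  "torso_edges G X =
     {{x1, x2} | x1 x2. x1 \<in> X \<and> x2 \<in> X \<and> x1 \<noteq> x2 \<and>
        (\<exists>ps. is_path G ps \<and> hd ps = x1 \<and> last ps = x2 \<and>
              set (butlast (tl ps)) \<inter> X = {})}"

definition abstr_graph :: "'v igraph \<Rightarrow> 'v igraph" where
  "abstr_graph G =
     \<lparr> verts = lft G \<union> rgt G,
       edges = torso_edges G (lft G \<union> rgt G),
       lab = lab G,
       lft = lft G,
       rgt = rgt G \<rparr>"

text \<open>Abstraction of an isomorphism class (well defined per the paper).\<close>
definition abstr :: "nat \<Rightarrow> nat igraph set \<Rightarrow> nat igraph set" where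
  "abstr k I = (THE J. \<exists>G\<in>I. J = iclass k (abstr_graph G))"

definition Ak :: "nat \<Rightarrow> nat igraph set set" where
  "Ak k = abstr k ` Ik k"

definition boxplus :: "nat \<Rightarrow> nat igraph set \<Rightarrow> nat igraph set \<Rightarrow> nat igraph set" where
  "boxplus k A1 A2 = abstr k (oplus k A1 A2)"

end

theory Submission
  imports Defs
begin

(* The abstraction of a gluing G1 \<union> G2 does not change if G1 is first replaced by its torso on
   its interface L1 \<union> R1.  Compatibility forces the inner vertices of G1 to be disjoint from G2,
   so a walk in G1 \<union> G2 can enter and leave the inner part of G1 only through interface vertices
   of G1; every such excursion is a torso edge of G1, and conversely every torso edge of G1 unfolds
   into such an excursion.  Hence G1 \<union> G2 and torso(G1) \<union> G2 have the same torso on any set of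
   vertices of torso(G1) \<union> G2, in particular on L1 \<union> R2, which gives
   [[ [[I]] \<oplus> J ]] = [[ I \<oplus> J ]].  The theorem follows by induction on the word, since
   abstraction is idempotent on its first letter. *)

section \<open>Walks and torsos\<close>

(* The set S records the vertices visited.  Unlike the paths in torso_edges, walks can be
   concatenated and reversed freely. *)
inductive walk :: "'v igraph \<Rightarrow> 'v \<Rightarrow> 'v \<Rightarrow> 'v set \<Rightarrow> bool" for G where
  walk_Nil: "a \<in> verts G \<Longrightarrow> walk G a a {a}"
| walk_Cons: "{a, b} \<in> edges G \<Longrightarrow> a \<in> verts G \<Longrightarrow> walk G b c S \<Longrightarrow> walk G a c (insert a S)"

lemma walk_verts:
  assumes "walk G a c S"
  shows "a \<in> S" "c \<in> S" "S \<subseteq> verts G"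
  using assms by (induction rule: walk.induct) auto

lemma walk_edge: "{a, b} \<in> edges G \<Longrightarrow> a \<in> verts G \<Longrightarrow> b \<in> verts G \<Longrightarrow> walk G a b {a, b}"
  by (auto intro: walk.intros)

lemma walk_snoc: "walk G a b S \<Longrightarrow> {b, c} \<in> edges G \<Longrightarrow> c \<in> verts G \<Longrightarrow> walk G a c (insert c S)"
  by (induction rule: walk.induct) (auto simp: insert_commute intro: walk.intros)

lemma walk_rev: "walk G a c S \<Longrightarrow> walk G c a S"
  by (induction rule: walk.induct) (auto simp: insert_commute intro: walk.intros walk_snoc)

lemma walk_append: "walk G a b S \<Longrightarrow> walk G b c T \<Longrightarrow> walk G a c (S \<union> T)"
proof (induction rule: walk.induct)
  case (walk_Nil a)
  then show ?case using walk_verts[of G a c T] by (simp add: insert_absorb)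
qed (auto intro: walk.intros)

lemma walk_mono: "walk G a c S \<Longrightarrow> verts G \<subseteq> verts H \<Longrightarrow> edges G \<subseteq> edges H \<Longrightarrow> walk H a c S"
  by (induction rule: walk.induct) (auto intro: walk.intros)

lemma walk_edge_if_two_vertices: "walk G a c S \<Longrightarrow> a \<noteq> c \<Longrightarrow> S \<subseteq> {a, c} \<Longrightarrow> {a, c} \<in> edges G"
proof (induction rule: walk.induct)
  case (walk_Cons a b c S)
  then have "b = c \<or> b = a" using walk_verts(1)[OF walk_Cons.hyps(3)] by blast
  then show ?case using walk_Cons by auto
qed simp

lemma is_path_Cons:
  "ps \<noteq> [] \<Longrightarrow> is_path G (a # ps) \<longleftrightarrow>
     a \<in> verts G \<and> a \<notin> set ps \<and> {a, hd ps} \<in> edges G \<and> is_path G ps"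
  by (cases ps) (auto simp: is_path_def All_less_Suc2)

lemma is_path_appendD: "is_path G (xs @ ys) \<Longrightarrow> ys \<noteq> [] \<Longrightarrow> is_path G ys"
  by (induction xs) (auto simp: is_path_Cons)

lemma is_path_imp_walk: "is_path G ps \<Longrightarrow> walk G (hd ps) (last ps) (set ps)"
proof (induction ps)
  case (Cons a ps)
  show ?case
  proof (cases "ps = []")
    case True
    then show ?thesis using Cons.prems by (simp add: is_path_def walk_Nil)
  next
    case False
    then have "a \<in> verts G" "{a, hd ps} \<in> edges G" "is_path G ps"
      using Cons.prems by (simp_all add: is_path_Cons)
    then show ?thesis using walk_Cons Cons.IH False by fastforce
  qed
qed (simp add: is_path_def)

lemma walk_imp_path: "walk G a c S \<Longrightarrow> \<exists>ps. is_path G ps \<and> hd ps = a \<and> last ps = c \<and> set ps \<subseteq> S"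
proof (induction rule: walk.induct)
  case (walk_Nil a)
  then show ?case by (intro exI[of _ "[a]"]) (simp add: is_path_def)
next
  case (walk_Cons a b c S)
  then obtain ps where ps: "is_path G ps" "hd ps = b" "last ps = c" "set ps \<subseteq> S" by blast
  then have "ps \<noteq> []" by (simp add: is_path_def)
  show ?case
  proof (cases "a \<in> set ps")
    case True
    then obtain xs ys where ps_eq: "ps = xs @ a # ys" by (meson split_list)
    then have "is_path G (a # ys)" using ps(1) is_path_appendD by blast
    moreover have "last (a # ys) = c" using ps(3) ps_eq by simp
    ultimately show ?thesis using ps(4) ps_eq by (intro exI[of _ "a # ys"]) auto
  next
    case False
    then have "is_path G (a # ps)"
      using is_path_Cons[OF \<open>ps \<noteq> []\<close>] ps walk_Cons.hyps(1,2) by simp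
    then show ?thesis using ps \<open>ps \<noteq> []\<close> by (intro exI[of _ "a # ps"]) auto
  qed
qed

lemma set_butlast_tl_distinct: "distinct ps \<Longrightarrow> set (butlast (tl ps)) = set ps - {hd ps, last ps}"
proof (cases ps)
  case (Cons a rest)
  then show "distinct ps \<Longrightarrow> ?thesis" by (cases rest rule: rev_cases) auto
qed simp

lemma ex_path_avoiding_iff_ex_walk:
  "(\<exists>ps. is_path G ps \<and> hd ps = x \<and> last ps = y \<and> set (butlast (tl ps)) \<inter> X = {}) \<longleftrightarrow>
   (\<exists>S. walk G x y S \<and> S \<inter> X \<subseteq> {x, y})"
proof
  assume "\<exists>ps. is_path G ps \<and> hd ps = x \<and> last ps = y \<and> set (butlast (tl ps)) \<inter> X = {}"
  then obtain ps where ps: "is_path G ps" "hd ps = x" "last ps = y" "set (butlast (tl ps)) \<inter> X = {}"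
    by blast
  have "set ps - {x, y} = set (butlast (tl ps))"
    using set_butlast_tl_distinct[of ps] ps(1-3) by (simp add: is_path_def)
  then have "set ps \<inter> X \<subseteq> {x, y}" using ps(4) by auto
  moreover have "walk G x y (set ps)" using is_path_imp_walk[OF ps(1)] ps(2,3) by simp
  ultimately show "\<exists>S. walk G x y S \<and> S \<inter> X \<subseteq> {x, y}" by blast
next
  assume "\<exists>S. walk G x y S \<and> S \<inter> X \<subseteq> {x, y}"
  then obtain S where S: "walk G x y S" "S \<inter> X \<subseteq> {x, y}" by blast
  obtain ps where ps: "is_path G ps" "hd ps = x" "last ps = y" "set ps \<subseteq> S"
    using walk_imp_path[OF S(1)] by blast
  have "set (butlast (tl ps)) = set ps - {x, y}"
    using set_butlast_tl_distinct[of ps] ps(1-3) by (simp add: is_path_def)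
  then have "set (butlast (tl ps)) \<inter> X = {}" using S(2) ps(4) by auto
  then show "\<exists>ps. is_path G ps \<and> hd ps = x \<and> last ps = y \<and> set (butlast (tl ps)) \<inter> X = {}"
    using ps by blast
qed

lemma mem_torso_edges_iff:
  "{x, y} \<in> torso_edges G X \<longleftrightarrow> x \<in> X \<and> y \<in> X \<and> x \<noteq> y \<and> (\<exists>S. walk G x y S \<and> S \<inter> X \<subseteq> {x, y})"
  (is "_ \<longleftrightarrow> ?adj x y")
proof
  assume "{x, y} \<in> torso_edges G X"
  then obtain x' y' where eq: "{x, y} = {x', y'}" and adj: "?adj x' y'"
    unfolding torso_edges_def ex_path_avoiding_iff_ex_walk by blast
  from eq consider "x = x'" "y = y'" | "x = y'" "y = x'" by (auto simp: doubleton_eq_iff)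
  then show "?adj x y"
  proof cases
    case 2
    then show ?thesis using adj walk_rev by (metis insert_commute)
  qed (use adj in simp)
next
  assume "?adj x y"
  then show "{x, y} \<in> torso_edges G X"
    unfolding torso_edges_def ex_path_avoiding_iff_ex_walk by blast
qed

lemma torso_edges_eqI:
  assumes "\<And>x y. x \<in> X \<Longrightarrow> y \<in> X \<Longrightarrow> x \<noteq> y \<Longrightarrow>
    (\<exists>S. walk G x y S \<and> S \<inter> X \<subseteq> {x, y}) \<longleftrightarrow> (\<exists>S. walk G' x y S \<and> S \<inter> X \<subseteq> {x, y})"
  shows "torso_edges G X = torso_edges G' X"
proof -
  have "{x, y} \<in> torso_edges G X \<longleftrightarrow> {x, y} \<in> torso_edges G' X" for x y
    unfolding mem_torso_edges_iff using assms[of x y] by (cases "x \<in> X \<and> y \<in> X \<and> x \<noteq> y") auto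
  moreover have "\<exists>x y. e = {x, y}" if "e \<in> torso_edges G X \<or> e \<in> torso_edges G' X" for e
    using that unfolding torso_edges_def by blast
  ultimately show ?thesis by blast
qed

section \<open>Interface graphs and their isomorphisms\<close>

lemma is_igraphD:
  assumes "is_igraph k G"
  shows "finite (verts G)" "lab G ` verts G \<subseteq> {1..k}" "lft G \<subseteq> verts G" "rgt G \<subseteq> verts G"
    "inj_on (lab G) (lft G)" "inj_on (lab G) (rgt G)"
  using assms unfolding is_igraph_def by blast+

lemma is_igraph_edgeE:
  assumes "is_igraph k G" "e \<in> edges G"
  obtains x y where "x \<noteq> y" "e = {x, y}" "x \<in> verts G" "y \<in> verts G"
proof -
  have "\<forall>e\<in>edges G. \<exists>x y. x \<noteq> y \<and> e = {x, y} \<and> x \<in> verts G \<and> y \<in> verts G"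
    using assms(1) unfolding is_igraph_def by (elim conjE)
  then show thesis using assms(2) that by blast
qed

lemma is_igraph_edgeD:
  assumes "is_igraph k G" "{a, b} \<in> edges G"
  shows "a \<in> verts G" "b \<in> verts G" "a \<noteq> b"
proof -
  obtain x y where "x \<noteq> y" "{a, b} = {x, y}" "x \<in> verts G" "y \<in> verts G"
    using is_igraph_edgeE[OF assms] .
  then show "a \<in> verts G" "b \<in> verts G" "a \<noteq> b" by (auto simp: doubleton_eq_iff)
qed

definition igraph_iso :: "('v \<Rightarrow> 'w) \<Rightarrow> 'v igraph \<Rightarrow> 'w igraph \<Rightarrow> bool" where
  "igraph_iso f G H \<longleftrightarrow> bij_betw f (verts G) (verts H) \<and>
     (\<forall>x\<in>verts G. \<forall>y\<in>verts G. {x, y} \<in> edges G \<longleftrightarrow> {f x, f y} \<in> edges H) \<and>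
     (\<forall>x\<in>verts G. lab H (f x) = lab G x) \<and>
     f ` lft G = lft H \<and> f ` rgt G = rgt H"

lemma iso_igraph_iff: "iso_igraph G H \<longleftrightarrow> (\<exists>f. igraph_iso f G H)"
  unfolding iso_igraph_def igraph_iso_def ..

lemma igraph_isoD:
  assumes "igraph_iso f G H"
  shows "bij_betw f (verts G) (verts H)" "inj_on f (verts G)" "f ` verts G = verts H"
    "\<And>x y. x \<in> verts G \<Longrightarrow> y \<in> verts G \<Longrightarrow> {f x, f y} \<in> edges H \<longleftrightarrow> {x, y} \<in> edges G"
    "\<And>x. x \<in> verts G \<Longrightarrow> lab H (f x) = lab G x"
    "f ` lft G = lft H" "f ` rgt G = rgt H"
  using assms unfolding igraph_iso_def bij_betw_def by simp_all

lemma igraph_iso_id: "igraph_iso id G G"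
  unfolding igraph_iso_def by auto

lemma igraph_iso_inv_into:
  assumes "lft G \<subseteq> verts G" "rgt G \<subseteq> verts G" and f: "igraph_iso f G H"
  shows "igraph_iso (inv_into (verts G) f) H G"
proof -
  let ?g = "inv_into (verts G) f"
  note f_iso = igraph_isoD[OF f]
  have g_bij: "bij_betw ?g (verts H) (verts G)" using bij_betw_inv_into[OF f_iso(1)] .
  have g_into: "?g x \<in> verts G" and f_g: "f (?g x) = x" if "x \<in> verts H" for x
    using that bij_betwE[OF g_bij] bij_betw_inv_into_right[OF f_iso(1)] by blast+
  show ?thesis unfolding igraph_iso_def
  proof (intro conjI ballI)
    fix x y assume "x \<in> verts H" "y \<in> verts H"
    then show "{x, y} \<in> edges H \<longleftrightarrow> {?g x, ?g y} \<in> edges G"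
      using f_iso(4)[OF g_into g_into, of x y] f_g by simp
  next
    fix x assume "x \<in> verts H"
    then show "lab G (?g x) = lab H x" using f_iso(5)[OF g_into, of x] f_g by simp
  next
    show "?g ` lft H = lft G" "?g ` rgt H = rgt G"
      using inv_into_image_cancel[OF f_iso(2)] assms(1,2) by (simp_all flip: f_iso(6,7))
  qed (rule g_bij)
qed

lemma igraph_iso_comp:
  assumes f: "igraph_iso f G H" and g: "igraph_iso g H K"
  shows "igraph_iso (g \<circ> f) G K"
proof -
  note f_iso = igraph_isoD[OF f] and g_iso = igraph_isoD[OF g]
  have f_into: "f x \<in> verts H" if "x \<in> verts G" for x using that f_iso(3) by blast
  show ?thesis unfolding igraph_iso_def
  proof (intro conjI ballI)
    show "bij_betw (g \<circ> f) (verts G) (verts K)" using bij_betw_trans[OF f_iso(1) g_iso(1)] .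
  next
    show "(g \<circ> f) ` lft G = lft K" "(g \<circ> f) ` rgt G = rgt K"
      unfolding image_comp[symmetric] f_iso(6,7) g_iso(6,7) by (rule refl)+
  qed (auto simp: f_iso(4,5) g_iso(4,5) f_into)
qed

lemma iso_igraph_refl: "iso_igraph G G"
  using igraph_iso_id iso_igraph_iff by blast

lemma iso_igraph_sym: "is_igraph k G \<Longrightarrow> iso_igraph G H \<Longrightarrow> iso_igraph H G"
  using igraph_iso_inv_into[OF is_igraphD(3,4)] iso_igraph_iff by metis

lemma iso_igraph_trans: "iso_igraph G H \<Longrightarrow> iso_igraph H K \<Longrightarrow> iso_igraph G K"
  using igraph_iso_comp iso_igraph_iff by metis

lemma iclass_eq_if_iso:
  assumes "is_igraph k G" "iso_igraph G H"
  shows "iclass k G = iclass k H"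
  using iso_igraph_sym[OF assms] assms(2) iso_igraph_trans unfolding iclass_def by blast

lemma self_in_iclass: "is_igraph k G \<Longrightarrow> G \<in> iclass k G"
  unfolding iclass_def using iso_igraph_refl by blast

lemma walk_image:
  assumes f: "igraph_iso f G H"
  shows "walk G a c S \<Longrightarrow> walk H (f a) (f c) (f ` S)"
proof (induction rule: walk.induct)
  case (walk_Nil a)
  then show ?case using igraph_isoD(3)[OF f] by (auto intro: walk.walk_Nil)
next
  case (walk_Cons a b c S)
  then have "{f a, f b} \<in> edges H" "f a \<in> verts H"
    using igraph_isoD(3,4)[OF f] walk_verts[OF walk_Cons.hyps(3)] by auto
  then show ?case using walk_Cons.IH by (auto intro: walk.walk_Cons)
qed

lemma torso_edges_image:
  assumes f: "igraph_iso f G H" and "X \<subseteq> verts G" and "{x, y} \<in> torso_edges G X"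
  shows "{f x, f y} \<in> torso_edges H (f ` X)"
proof -
  obtain S where S: "x \<in> X" "y \<in> X" "x \<noteq> y" "walk G x y S" "S \<inter> X \<subseteq> {x, y}"
    using assms(3) unfolding mem_torso_edges_iff by blast
  have inj: "inj_on f (verts G)" using igraph_isoD(2)[OF f] .
  have "f ` S \<inter> f ` X = f ` (S \<inter> X)"
    using inj_on_image_Int[OF inj walk_verts(3)[OF S(4)]] assms(2) by simp
  also have "\<dots> \<subseteq> {f x, f y}" using S(5) by auto
  finally have "f ` S \<inter> f ` X \<subseteq> {f x, f y}" .
  moreover have "f x \<noteq> f y" using S(1-3) assms(2) inj_onD[OF inj] by blast
  ultimately show ?thesis
    unfolding mem_torso_edges_iff using S(1,2) walk_image[OF f S(4)] by blast
qed

abbreviation interface :: "'v igraph \<Rightarrow> 'v set" where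
  "interface G \<equiv> lft G \<union> rgt G"

abbreviation inner_verts :: "'v igraph \<Rightarrow> 'v set" where
  "inner_verts G \<equiv> verts G - interface G"

lemma abstr_graph_simps [simp]:
  "verts (abstr_graph G) = interface G"
  "edges (abstr_graph G) = torso_edges G (interface G)"
  "lab (abstr_graph G) = lab G"
  "lft (abstr_graph G) = lft G"
  "rgt (abstr_graph G) = rgt G"
  by (simp_all add: abstr_graph_def)

lemma is_igraph_abstr_graph:
  assumes "is_igraph k G"
  shows "is_igraph k (abstr_graph G)"
proof -
  have "lft G \<union> rgt G \<subseteq> verts G" using is_igraphD(3,4)[OF assms] by blast
  then have "finite (lft G \<union> rgt G)" "lab G ` (lft G \<union> rgt G) \<subseteq> {1..k}"
    using is_igraphD(1,2)[OF assms] finite_subset by blast+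
  then show ?thesis
    using is_igraphD(5,6)[OF assms] unfolding is_igraph_def by (auto simp: torso_edges_def)
qed

lemma torso_edges_verts:
  assumes G: "is_igraph k G"
  shows "torso_edges G (verts G) = edges G"
proof (intro equalityI subsetI)
  fix e assume "e \<in> torso_edges G (verts G)"
  then obtain x y S where e: "e = {x, y}" "x \<noteq> y" and S: "walk G x y S" "S \<inter> verts G \<subseteq> {x, y}"
    unfolding torso_edges_def ex_path_avoiding_iff_ex_walk by blast
  have "S \<subseteq> {x, y}" using S walk_verts(3)[OF S(1)] by blast
  then show "e \<in> edges G" using walk_edge_if_two_vertices[OF S(1) e(2)] e(1) by simp
next
  fix e assume "e \<in> edges G"
  moreover obtain x y where "x \<noteq> y" "e = {x, y}" "x \<in> verts G" "y \<in> verts G"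
    using is_igraph_edgeE[OF G \<open>e \<in> edges G\<close>] by blast
  ultimately have "{x, y} \<in> torso_edges G (verts G)"
    unfolding mem_torso_edges_iff using walk_edge[of x y G] by blast
  then show "e \<in> torso_edges G (verts G)" using \<open>e = {x, y}\<close> by simp
qed

lemma abstr_graph_idem: "is_igraph k G \<Longrightarrow> abstr_graph (abstr_graph G) = abstr_graph G"
  using torso_edges_verts[OF is_igraph_abstr_graph] by (simp add: abstr_graph_def)

lemma igraph_iso_abstr_graph:
  assumes G: "is_igraph k G" and f: "igraph_iso f G H"
  shows "igraph_iso f (abstr_graph G) (abstr_graph H)"
proof -
  let ?X = "lft G \<union> rgt G" and ?g = "inv_into (verts G) f"
  note f_iso = igraph_isoD[OF f]
  have X: "?X \<subseteq> verts G" using is_igraphD(3,4)[OF G] by blast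
  have fX: "f ` ?X = lft H \<union> rgt H" using f_iso(6,7) by (simp add: image_Un)
  have g: "igraph_iso ?g H G" using igraph_iso_inv_into[OF is_igraphD(3,4)[OF G] f] .
  have fX_verts: "f ` ?X \<subseteq> verts H" using X f_iso(3) by blast
  have gX: "?g ` (lft H \<union> rgt H) = ?X" using inv_into_image_cancel[OF f_iso(2) X] fX by simp
  have gf: "?g (f x) = x" if "x \<in> ?X" for x using inv_into_f_f[OF f_iso(2)] X that by blast
  show ?thesis unfolding igraph_iso_def abstr_graph_simps
  proof (intro conjI ballI)
    show "bij_betw f ?X (lft H \<union> rgt H)"
      using bij_betw_subset[OF f_iso(1) X fX] .
  next
    fix x y assume xy: "x \<in> ?X" "y \<in> ?X"
    show "{x, y} \<in> torso_edges G ?X \<longleftrightarrow> {f x, f y} \<in> torso_edges H (lft H \<union> rgt H)"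
      using torso_edges_image[OF f X, of x y] torso_edges_image[OF g fX_verts, of "f x" "f y"]
      unfolding fX gX gf[OF xy(1)] gf[OF xy(2)] by blast
  next
    fix x assume "x \<in> ?X"
    then show "lab H (f x) = lab G x" using f_iso(5) X by blast
  qed (use f_iso(6,7) in simp_all)
qed

lemma abstr_iclass:
  assumes G: "is_igraph k G"
  shows "abstr k (iclass k G) = iclass k (abstr_graph G)"
  unfolding abstr_def
proof (rule the_equality)
  show "\<exists>H\<in>iclass k G. iclass k (abstr_graph G) = iclass k (abstr_graph H)"
    using self_in_iclass[OF G] by blast
next
  fix J assume "\<exists>H\<in>iclass k G. J = iclass k (abstr_graph H)"
  then obtain H f where J: "J = iclass k (abstr_graph H)" and f: "igraph_iso f G H"
    unfolding iclass_def iso_igraph_iff by blast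
  have "iso_igraph (abstr_graph G) (abstr_graph H)"
    using igraph_iso_abstr_graph[OF G f] iso_igraph_iff by blast
  then show "J = iclass k (abstr_graph G)"
    using iclass_eq_if_iso[OF is_igraph_abstr_graph[OF G]] J by simp
qed

section \<open>Gluing\<close>

lemma glue_simps [simp]:
  "verts (glue G1 G2) = verts G1 \<union> verts G2"
  "edges (glue G1 G2) = edges G1 \<union> edges G2"
  "lft (glue G1 G2) = lft G1"
  "rgt (glue G1 G2) = rgt G2"
  by (simp_all add: glue_def)

lemma lab_glue_left: "x \<in> verts G1 \<Longrightarrow> lab (glue G1 G2) x = lab G1 x"
  by (simp add: glue_def)

lemma compatibleD:
  assumes "compatible G1 G2"
  shows "verts G1 \<inter> verts G2 = {x \<in> rgt G1. lab G1 x \<in> lab G1 ` rgt G1 \<inter> lab G2 ` lft G2}"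
    "verts G1 \<inter> verts G2 = {x \<in> lft G2. lab G2 x \<in> lab G1 ` rgt G1 \<inter> lab G2 ` lft G2}"
    "\<And>x. x \<in> verts G1 \<Longrightarrow> x \<in> verts G2 \<Longrightarrow> lab G1 x = lab G2 x"
  using assms unfolding compatible_def Let_def by blast+

lemma compatible_Int_subset:
  assumes "compatible G1 G2"
  shows "verts G1 \<inter> verts G2 \<subseteq> rgt G1" "verts G1 \<inter> verts G2 \<subseteq> lft G2"
proof -
  show "verts G1 \<inter> verts G2 \<subseteq> rgt G1" unfolding compatibleD(1)[OF assms] by blast
  show "verts G1 \<inter> verts G2 \<subseteq> lft G2" unfolding compatibleD(2)[OF assms] by blast
qed

lemma lab_glue_compatible:
  "compatible G1 G2 \<Longrightarrow> x \<in> verts G2 \<Longrightarrow> lab (glue G1 G2) x = lab G2 x"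
  using compatibleD(3) by (auto simp: glue_def)

lemma is_igraph_glue:
  assumes G1: "is_igraph k G1" and G2: "is_igraph k G2" and c: "compatible G1 G2"
  shows "is_igraph k (glue G1 G2)"
  unfolding is_igraph_def glue_simps
proof (intro conjI ballI)
  fix e assume "e \<in> edges G1 \<union> edges G2"
  then show "\<exists>x y. x \<noteq> y \<and> e = {x, y} \<and> x \<in> verts G1 \<union> verts G2 \<and> y \<in> verts G1 \<union> verts G2"
  proof
    assume "e \<in> edges G1"
    then obtain x y where "x \<noteq> y" "e = {x, y}" "x \<in> verts G1" "y \<in> verts G1"
      by (rule is_igraph_edgeE[OF G1])
    then show ?thesis by blast
  next
    assume "e \<in> edges G2"
    then obtain x y where "x \<noteq> y" "e = {x, y}" "x \<in> verts G2" "y \<in> verts G2"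
      by (rule is_igraph_edgeE[OF G2])
    then show ?thesis by blast
  qed
next
  show "lab (glue G1 G2) ` (verts G1 \<union> verts G2) \<subseteq> {1..k}"
    using is_igraphD(2)[OF G1] is_igraphD(2)[OF G2] by (auto simp: glue_def)
  show "inj_on (lab (glue G1 G2)) (lft G1)"
    using is_igraphD(5)[OF G1]
  proof (rule inj_on_cong[THEN iffD1, rotated])
    show "x \<in> lft G1 \<Longrightarrow> lab G1 x = lab (glue G1 G2) x" for x
      using is_igraphD(3)[OF G1] lab_glue_left by (metis subsetD)
  qed
  show "inj_on (lab (glue G1 G2)) (rgt G2)"
    using is_igraphD(6)[OF G2]
  proof (rule inj_on_cong[THEN iffD1, rotated])
    show "x \<in> rgt G2 \<Longrightarrow> lab G2 x = lab (glue G1 G2) x" for x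
      using is_igraphD(4)[OF G2] lab_glue_compatible[OF c] by (metis subsetD)
  qed
qed (use is_igraphD(1,3,4)[OF G1] is_igraphD(1,3,4)[OF G2] in auto)

lemma igraph_iso_edge_iff_extension:
  assumes f: "igraph_iso f G H" and "is_igraph k G" "is_igraph k' H"
    and h: "\<And>x. x \<in> verts G \<Longrightarrow> h x = f x"
    and "x \<in> verts G \<longleftrightarrow> h x \<in> verts H" "y \<in> verts G \<longleftrightarrow> h y \<in> verts H"
  shows "{x, y} \<in> edges G \<longleftrightarrow> {h x, h y} \<in> edges H"
proof
  assume e: "{x, y} \<in> edges G"
  then have "x \<in> verts G" "y \<in> verts G" using is_igraph_edgeD[OF assms(2)] by blast+
  then show "{h x, h y} \<in> edges H" using e igraph_isoD(4)[OF f] h by simp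
next
  assume e: "{h x, h y} \<in> edges H"
  then have "x \<in> verts G" "y \<in> verts G" using is_igraph_edgeD[OF assms(3)] assms(5,6) by blast+
  then show "{x, y} \<in> edges G" using e igraph_isoD(4)[OF f] h by simp
qed

context
  fixes f1 :: "'v \<Rightarrow> 'w" and f2 :: "'v \<Rightarrow> 'w" and G1 G2 :: "'v igraph" and H1 H2 :: "'w igraph"
  assumes f1: "igraph_iso f1 G1 H1" and f2: "igraph_iso f2 G2 H2"
    and agree: "\<And>x. x \<in> verts G1 \<inter> verts G2 \<Longrightarrow> f1 x = f2 x"
    and overlap: "f1 ` (verts G1 \<inter> verts G2) = verts H1 \<inter> verts H2"
begin

lemma igraph_iso_right_overlap: "f2 ` (verts G1 \<inter> verts G2) = verts H1 \<inter> verts H2"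
  using overlap agree by (metis image_cong)

lemma igraph_iso_right_mem_left_iff: "x \<in> verts G2 \<Longrightarrow> f2 x \<in> verts H1 \<longleftrightarrow> x \<in> verts G1"
  using inj_on_image_mem_iff[OF igraph_isoD(2)[OF f2], of x "verts G1 \<inter> verts G2"]
    igraph_isoD(3)[OF f2] igraph_iso_right_overlap by blast

lemma igraph_iso_left_mem_right_iff: "x \<in> verts G1 \<Longrightarrow> f1 x \<in> verts H2 \<longleftrightarrow> x \<in> verts G2"
  using inj_on_image_mem_iff[OF igraph_isoD(2)[OF f1], of x "verts G1 \<inter> verts G2"]
    igraph_isoD(3)[OF f1] overlap by blast

lemma bij_betw_glue_map:
  "bij_betw (\<lambda>x. if x \<in> verts G1 then f1 x else f2 x) (verts G1 \<union> verts G2) (verts H1 \<union> verts H2)"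
  (is "bij_betw ?h _ _")
proof -
  have "bij_betw f2 (verts G1 \<inter> verts G2) (verts H1 \<inter> verts H2)"
    using bij_betw_subset[OF igraph_isoD(1)[OF f2] _ igraph_iso_right_overlap] by blast
  then have "bij_betw f2 (verts G2 - verts G1 \<inter> verts G2) (verts H2 - verts H1 \<inter> verts H2)"
    using bij_betw_DiffI[OF igraph_isoD(1)[OF f2]] by blast
  then have "bij_betw f2 (verts G2 - verts G1) (verts H2 - verts H1)"
    by (simp add: Diff_Int)
  moreover have "bij_betw ?h (verts G2 - verts G1) A \<longleftrightarrow> bij_betw f2 (verts G2 - verts G1) A" for A
    by (rule bij_betw_cong) simp
  ultimately have "bij_betw ?h (verts G2 - verts G1) (verts H2 - verts H1)" by blast
  moreover have "bij_betw ?h (verts G1) A \<longleftrightarrow> bij_betw f1 (verts G1) A" for A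
    by (rule bij_betw_cong) simp
  then have "bij_betw ?h (verts G1) (verts H1)" using igraph_isoD(1)[OF f1] by blast
  ultimately have
    "bij_betw ?h (verts G1 \<union> (verts G2 - verts G1)) (verts H1 \<union> (verts H2 - verts H1))"
    by (intro bij_betw_combine) auto
  then show ?thesis by simp
qed

lemma igraph_iso_glue:
  assumes G1: "is_igraph k G1" and G2: "is_igraph k G2"
    and H1: "is_igraph k H1" and H2: "is_igraph k H2"
  shows "igraph_iso (\<lambda>x. if x \<in> verts G1 then f1 x else f2 x) (glue G1 G2) (glue H1 H2)"
    (is "igraph_iso ?h _ _")
proof -
  note f1_iso = igraph_isoD[OF f1] and f2_iso = igraph_isoD[OF f2]
  have h1: "?h x = f1 x" if "x \<in> verts G1" for x using that by simp
  have h2: "?h x = f2 x" if "x \<in> verts G2" for x using agree that by simp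
  have h_mem1: "?h x \<in> verts H1 \<longleftrightarrow> x \<in> verts G1" if "x \<in> verts G1 \<union> verts G2" for x
    using that f1_iso(3) igraph_iso_right_mem_left_iff by auto
  have h_mem2: "?h x \<in> verts H2 \<longleftrightarrow> x \<in> verts G2" if "x \<in> verts G1 \<union> verts G2" for x
    using that h2 f2_iso(3) igraph_iso_left_mem_right_iff by auto
  have edges1: "{x, y} \<in> edges G1 \<longleftrightarrow> {?h x, ?h y} \<in> edges H1"
    and edges2: "{x, y} \<in> edges G2 \<longleftrightarrow> {?h x, ?h y} \<in> edges H2"
    if "x \<in> verts G1 \<union> verts G2" "y \<in> verts G1 \<union> verts G2" for x y
    using igraph_iso_edge_iff_extension[OF f1 G1 H1 h1]
      igraph_iso_edge_iff_extension[OF f2 G2 H2 h2]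
      h_mem1 h_mem2 that by blast+
  show ?thesis unfolding igraph_iso_def glue_simps
  proof (intro conjI ballI)
    show "bij_betw ?h (verts G1 \<union> verts G2) (verts H1 \<union> verts H2)" by (rule bij_betw_glue_map)
  next
    fix x y assume "x \<in> verts G1 \<union> verts G2" "y \<in> verts G1 \<union> verts G2"
    then show "{x, y} \<in> edges G1 \<union> edges G2 \<longleftrightarrow> {?h x, ?h y} \<in> edges H1 \<union> edges H2"
      using edges1 edges2 by blast
  next
    fix x assume "x \<in> verts G1 \<union> verts G2"
    then show "lab (glue H1 H2) (?h x) = lab (glue G1 G2) x"
      using h_mem1 h2 f1_iso(5) f2_iso(5) by (auto simp: glue_def)
  next
    have "\<And>x. x \<in> lft G1 \<Longrightarrow> ?h x = f1 x" using is_igraphD(3)[OF G1] h1 by blast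
    then have "?h ` lft G1 = f1 ` lft G1" by (rule image_cong[OF refl])
    then show "?h ` lft G1 = lft H1" using f1_iso(6) by simp
    have "\<And>x. x \<in> rgt G2 \<Longrightarrow> ?h x = f2 x" using is_igraphD(4)[OF G2] h2 by blast
    then have "?h ` rgt G2 = f2 ` rgt G2" by (rule image_cong[OF refl])
    then show "?h ` rgt G2 = rgt H2" using f2_iso(7) by simp
  qed
qed

end

lemma igraph_iso_image_lab_filter:
  assumes f: "igraph_iso f G H" and "A \<subseteq> verts G"
  shows "f ` {x \<in> A. P (lab G x)} = {y \<in> f ` A. P (lab H y)}"
proof -
  have "lab H (f x) = lab G x" if "x \<in> A" for x using igraph_isoD(5)[OF f] assms(2) that by blast
  then show ?thesis by auto
qed

lemma igraph_iso_lab_image: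
  assumes f: "igraph_iso f G H" and "A \<subseteq> verts G"
  shows "lab H ` f ` A = lab G ` A"
  using igraph_iso_image_lab_filter[OF assms, of "\<lambda>_. True"] igraph_isoD(5)[OF f] assms(2)
  by (auto simp: image_iff) (metis subsetD)

lemma compatible_igraph_iso_overlap:
  assumes G1: "is_igraph k G1" and G2: "is_igraph k G2" and H1: "is_igraph k H1"
    and c: "compatible G1 G2" and cH: "compatible H1 H2"
    and f1: "igraph_iso f1 G1 H1" and f2: "igraph_iso f2 G2 H2"
  shows "f1 ` (verts G1 \<inter> verts G2) = verts H1 \<inter> verts H2"
    and "\<And>x. x \<in> verts G1 \<inter> verts G2 \<Longrightarrow> f1 x = f2 x"
proof -
  define J where "J = lab G1 ` rgt G1 \<inter> lab G2 ` lft G2"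
  have J_H: "lab H1 ` rgt H1 \<inter> lab H2 ` lft H2 = J"
    using igraph_iso_lab_image[OF f1 is_igraphD(4)[OF G1]]
      igraph_iso_lab_image[OF f2 is_igraphD(3)[OF G2]]
    unfolding J_def igraph_isoD(6)[OF f2] igraph_isoD(7)[OF f1] by simp
  have ov_G: "verts G1 \<inter> verts G2 = {x \<in> rgt G1. lab G1 x \<in> J}"
      "verts G1 \<inter> verts G2 = {x \<in> lft G2. lab G2 x \<in> J}"
    using compatibleD(1,2)[OF c] unfolding J_def by simp_all
  have ov_H: "verts H1 \<inter> verts H2 = {y \<in> rgt H1. lab H1 y \<in> J}"
      "verts H1 \<inter> verts H2 = {y \<in> lft H2. lab H2 y \<in> J}"
    using compatibleD(1,2)[OF cH] unfolding J_H by simp_all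
  show ov1: "f1 ` (verts G1 \<inter> verts G2) = verts H1 \<inter> verts H2"
    unfolding ov_G(1) ov_H(1)
      igraph_iso_image_lab_filter[OF f1 is_igraphD(4)[OF G1], of "\<lambda>l. l \<in> J"]
      igraph_isoD(7)[OF f1] ..
  have ov2: "f2 ` (verts G1 \<inter> verts G2) = verts H1 \<inter> verts H2"
    unfolding ov_G(2) ov_H(2)
      igraph_iso_image_lab_filter[OF f2 is_igraphD(3)[OF G2], of "\<lambda>l. l \<in> J"]
      igraph_isoD(6)[OF f2] ..
  fix x assume x: "x \<in> verts G1 \<inter> verts G2"
  then have in_H: "f1 x \<in> rgt H1" "f2 x \<in> rgt H1" "f2 x \<in> verts H1 \<inter> verts H2"
    using ov1 ov2 ov_H(1) by blast+
  have "lab H1 (f1 x) = lab G1 x" using igraph_isoD(5)[OF f1] x by blast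
  also have "\<dots> = lab G2 x" using compatibleD(3)[OF c] x by blast
  also have "\<dots> = lab H2 (f2 x)" using igraph_isoD(5)[OF f2] x by simp
  also have "\<dots> = lab H1 (f2 x)" using compatibleD(3)[OF cH] in_H(3) by simp
  finally show "f1 x = f2 x" using inj_onD[OF is_igraphD(6)[OF H1]] in_H(1,2) by blast
qed

lemma oplus_iclass:
  assumes G1: "is_igraph k G1" and G2: "is_igraph k G2" and c: "compatible G1 G2"
  shows "oplus k (iclass k G1) (iclass k G2) = iclass k (glue G1 G2)"
  unfolding oplus_def
proof (rule the_equality)
  show "\<exists>H1\<in>iclass k G1. \<exists>H2\<in>iclass k G2.
      compatible H1 H2 \<and> iclass k (glue G1 G2) = iclass k (glue H1 H2)"
    using self_in_iclass[OF G1] self_in_iclass[OF G2] c by blast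
next
  fix I assume "\<exists>H1\<in>iclass k G1. \<exists>H2\<in>iclass k G2. compatible H1 H2 \<and> I = iclass k (glue H1 H2)"
  then obtain H1 H2 f1 f2 where H: "is_igraph k H1" "is_igraph k H2" "compatible H1 H2"
      and I: "I = iclass k (glue H1 H2)" and f: "igraph_iso f1 G1 H1" "igraph_iso f2 G2 H2"
    unfolding iclass_def iso_igraph_iff by blast
  note overlap = compatible_igraph_iso_overlap[OF G1 G2 H(1) c H(3) f]
  have "igraph_iso (\<lambda>x. if x \<in> verts G1 then f1 x else f2 x) (glue G1 G2) (glue H1 H2)"
    using igraph_iso_glue[OF f overlap(2) overlap(1) G1 G2 H(1,2)] .
  then have "iso_igraph (glue G1 G2) (glue H1 H2)" using iso_igraph_iff by blast
  then show "I = iclass k (glue G1 G2)"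
    using iclass_eq_if_iso[OF is_igraph_glue[OF G1 G2 c]] I by simp
qed

section \<open>Compatible copies\<close>

definition map_igraph :: "('v \<Rightarrow> 'w) \<Rightarrow> 'v igraph \<Rightarrow> 'w igraph" where
  "map_igraph f G =
     \<lparr>verts = f ` verts G, edges = (`) f ` edges G, lab = lab G \<circ> inv_into (verts G) f,
      lft = f ` lft G, rgt = f ` rgt G\<rparr>"

lemma map_igraph_simps [simp]:
  "verts (map_igraph f G) = f ` verts G"
  "edges (map_igraph f G) = (`) f ` edges G"
  "lft (map_igraph f G) = f ` lft G"
  "rgt (map_igraph f G) = f ` rgt G"
  by (simp_all add: map_igraph_def)

lemma lab_map_igraph: "inj_on f (verts G) \<Longrightarrow> x \<in> verts G \<Longrightarrow> lab (map_igraph f G) (f x) = lab G x"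
  by (simp add: map_igraph_def)

lemma igraph_iso_map_igraph:
  assumes G: "is_igraph k G" and inj: "inj_on f (verts G)"
  shows "igraph_iso f G (map_igraph f G)"
  unfolding igraph_iso_def map_igraph_simps
proof (intro conjI ballI)
  fix x y assume xy: "x \<in> verts G" "y \<in> verts G"
  show "{x, y} \<in> edges G \<longleftrightarrow> {f x, f y} \<in> (`) f ` edges G"
  proof
    assume "{f x, f y} \<in> (`) f ` edges G"
    then obtain e where e: "e \<in> edges G" "f ` e = f ` {x, y}" by auto
    moreover obtain a b where "e = {a, b}" "a \<in> verts G" "b \<in> verts G"
      using is_igraph_edgeE[OF G e(1)] by blast
    ultimately show "{x, y} \<in> edges G" using inj_on_image_eq_iff[OF inj, of e "{x, y}"] xy by simp
  next
    assume "{x, y} \<in> edges G"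
    then have "f ` {x, y} \<in> (`) f ` edges G" by (rule imageI)
    then show "{f x, f y} \<in> (`) f ` edges G" by simp
  qed
next
  show "bij_betw f (verts G) (f ` verts G)" using inj by (simp add: bij_betw_def)
next
  fix x assume "x \<in> verts G"
  then show "lab (map_igraph f G) (f x) = lab G x" using lab_map_igraph[OF inj] by blast
qed simp_all

lemma is_igraph_map_igraph:
  assumes G: "is_igraph k G" and inj: "inj_on f (verts G)"
  shows "is_igraph k (map_igraph f G)"
  unfolding is_igraph_def map_igraph_simps
proof (intro conjI ballI)
  note iso = igraph_iso_map_igraph[OF G inj]
  show "lab (map_igraph f G) ` f ` verts G \<subseteq> {1..k}"
    using igraph_iso_lab_image[OF iso order_refl] is_igraphD(2)[OF G] by simp
  have inj_lab: "inj_on (lab (map_igraph f G)) (f ` A)" if "A \<subseteq> verts G" "inj_on (lab G) A" for A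
  proof (rule inj_on_imageI)
    show "inj_on (lab (map_igraph f G) \<circ> f) A"
      using that lab_map_igraph[OF inj] by (simp add: inj_on_def subset_eq)
  qed
  show "inj_on (lab (map_igraph f G)) (f ` lft G)" "inj_on (lab (map_igraph f G)) (f ` rgt G)"
    using inj_lab is_igraphD(3-6)[OF G] by simp_all
next
  fix e' assume "e' \<in> (`) f ` edges G"
  then obtain e where "e \<in> edges G" "e' = f ` e" by blast
  moreover obtain a b where "a \<noteq> b" "e = {a, b}" "a \<in> verts G" "b \<in> verts G"
    using is_igraph_edgeE[OF G \<open>e \<in> edges G\<close>] by blast
  ultimately show "\<exists>x y. x \<noteq> y \<and> e' = {x, y} \<and> x \<in> f ` verts G \<and> y \<in> f ` verts G"
    using inj_onD[OF inj] by (intro exI[of _ "f a"] exI[of _ "f b"]) auto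
qed (use is_igraphD(1,3,4)[OF G] in auto)

lemma compatible_map_igraph:
  assumes G1: "is_igraph k G1" and G2: "is_igraph k G2" and inj: "inj_on f (verts G2)"
    and match: "\<And>x. x \<in> lft G2 \<Longrightarrow> lab G2 x \<in> lab G1 ` rgt G1 \<Longrightarrow>
      f x \<in> rgt G1 \<and> lab G1 (f x) = lab G2 x"
    and fresh: "\<And>x. x \<in> verts G2 \<Longrightarrow> \<not> (x \<in> lft G2 \<and> lab G2 x \<in> lab G1 ` rgt G1) \<Longrightarrow>
      f x \<notin> verts G1"
  shows "compatible G1 (map_igraph f G2)"
proof -
  let ?G2' = "map_igraph f G2"
  define J where "J = lab G1 ` rgt G1 \<inter> lab G2 ` lft G2"
  define M where "M = {x \<in> lft G2. lab G2 x \<in> J}"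
  note iso = igraph_iso_map_igraph[OF G2 inj] and L2 = is_igraphD(3)[OF G2]
  have J': "lab G1 ` rgt G1 \<inter> lab ?G2' ` lft ?G2' = J"
    using igraph_iso_lab_image[OF iso L2] unfolding J_def by simp
  have M_match: "f x \<in> rgt G1 \<and> lab G1 (f x) = lab G2 x" if "x \<in> M" for x
    using match that unfolding M_def J_def by blast
  have overlap: "verts G1 \<inter> verts ?G2' = f ` M"
    using M_match fresh is_igraphD(4)[OF G1] L2 unfolding M_def J_def by fastforce
  have "f ` M = {y \<in> rgt G1. lab G1 y \<in> J}"
  proof (intro equalityI subsetI)
    fix y assume y: "y \<in> {y \<in> rgt G1. lab G1 y \<in> J}"
    then obtain x where "x \<in> lft G2" "lab G1 y = lab G2 x" unfolding J_def by auto
    then have x: "x \<in> M" "lab G1 y = lab G2 x" using y unfolding M_def by auto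
    then have "f x = y" using M_match[OF x(1)] inj_onD[OF is_igraphD(6)[OF G1]] y by auto
    then show "y \<in> f ` M" using x(1) by blast
  qed (use M_match in \<open>auto simp: M_def\<close>)
  moreover have "f ` M = {y \<in> lft ?G2'. lab ?G2' y \<in> J}"
    using igraph_iso_image_lab_filter[OF iso L2, of "\<lambda>l. l \<in> J"] unfolding M_def by simp
  moreover have "lab G1 y = lab ?G2' y" if "y \<in> f ` M" for y
    using that M_match lab_map_igraph[OF inj] L2 unfolding M_def by auto
  ultimately show ?thesis unfolding compatible_def Let_def J' overlap by blast
qed

lemma ex_compatible_copy:
  fixes G1 G2 :: "nat igraph"
  assumes G1: "is_igraph k G1" and G2: "is_igraph k G2"
  obtains G2' where "is_igraph k G2'" "iso_igraph G2 G2'" "compatible G1 G2'"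
proof -
  define P where "P x \<longleftrightarrow> x \<in> lft G2 \<and> lab G2 x \<in> lab G1 ` rgt G1" for x
  define N where "N = Suc (Max (insert 0 (verts G1)))"
  define f where "f x = (if P x then the_inv_into (rgt G1) (lab G1) (lab G2 x) else x + N)" for x
  note inj_R1 = is_igraphD(6)[OF G1]
  have match: "f x \<in> rgt G1 \<and> lab G1 (f x) = lab G2 x" if "P x" for x
  proof -
    have "lab G2 x \<in> lab G1 ` rgt G1" and fx: "f x = the_inv_into (rgt G1) (lab G1) (lab G2 x)"
      using that unfolding P_def f_def by simp_all
    then show ?thesis
      using the_inv_into_into[OF inj_R1 _ order_refl] f_the_inv_into_f[OF inj_R1] by simp
  qed
  have fresh: "f x \<notin> verts G1" if "\<not> P x" for x
  proof
    assume "f x \<in> verts G1"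
    then have "x + N \<le> Max (insert 0 (verts G1))"
      using that is_igraphD(1)[OF G1] unfolding f_def by simp
    then show False unfolding N_def by simp
  qed
  have inj: "inj_on f (verts G2)"
  proof (rule inj_onI)
    fix x y assume "x \<in> verts G2" "y \<in> verts G2" and eq: "f x = f y"
    have "f z \<in> verts G1 \<longleftrightarrow> P z" for z
      using match[of z] fresh[of z] is_igraphD(4)[OF G1] by auto
    then have Pxy: "P x \<longleftrightarrow> P y" using eq by metis
    show "x = y"
    proof (cases "P x")
      case True
      then have "lab G2 x = lab G2 y" using match[of x] match[of y] Pxy eq by simp
      then show ?thesis using True Pxy inj_onD[OF is_igraphD(5)[OF G2]] unfolding P_def by blast
    qed (use eq Pxy in \<open>simp add: f_def\<close>)
  qed
  show thesis
  proof
    show "is_igraph k (map_igraph f G2)" using is_igraph_map_igraph[OF G2 inj] .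
    show "iso_igraph G2 (map_igraph f G2)"
      using igraph_iso_map_igraph[OF G2 inj] iso_igraph_iff by blast
    show "compatible G1 (map_igraph f G2)"
      using compatible_map_igraph[OF G1 G2 inj] match fresh unfolding P_def by blast
  qed
qed

lemma compatible_representatives:
  fixes I J :: "nat igraph set"
  assumes "I \<in> Ik k" "J \<in> Ik k"
  obtains G1 G2 where "is_igraph k G1" "is_igraph k G2" "compatible G1 G2"
    "I = iclass k G1" "J = iclass k G2"
proof -
  obtain G1 G2 where G1: "is_igraph k G1" "I = iclass k G1"
    and G2: "is_igraph k G2" "J = iclass k G2"
    using assms unfolding Ik_def by blast
  obtain G2' where G2': "is_igraph k G2'" "iso_igraph G2 G2'" and c: "compatible G1 G2'"
    using ex_compatible_copy[OF G1(1) G2(1)] .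
  show thesis using that[OF G1(1) G2'(1) c G1(2)] G2(2) iclass_eq_if_iso[OF G2(1) G2'(2)] by simp
qed

section \<open>Abstracting the left factor of a gluing\<close>

context
  fixes k :: nat and G1 G2 :: "'v igraph"
  assumes G1: "is_igraph k G1" and G2: "is_igraph k G2" and c: "compatible G1 G2"
begin

lemma inner_verts_notin_right: "x \<in> inner_verts G1 \<Longrightarrow> x \<notin> verts G2"
  using compatible_Int_subset(1)[OF c] by blast

lemma mem_interface_if_verts_glue_abstr:
  "x \<in> verts G1 \<Longrightarrow> x \<in> verts (glue (abstr_graph G1) G2) \<Longrightarrow> x \<in> interface G1"
  using compatible_Int_subset(1)[OF c] by auto

lemma edge_glue_abstr:
  assumes "{a, b} \<in> edges (glue G1 G2)"
    and "a \<in> verts (glue (abstr_graph G1) G2)" "b \<in> verts (glue (abstr_graph G1) G2)"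
  shows "{a, b} \<in> edges (glue (abstr_graph G1) G2)"
proof -
  have "{a, b} \<in> edges G1 \<or> {a, b} \<in> edges G2" using assms(1) by simp
  moreover have "{a, b} \<in> torso_edges G1 (interface G1)" if e: "{a, b} \<in> edges G1"
  proof -
    have "a \<in> interface G1" "b \<in> interface G1" "a \<noteq> b"
      using e is_igraph_edgeD[OF G1] mem_interface_if_verts_glue_abstr assms(2,3) by blast+
    moreover have "walk G1 a b {a, b}" using e is_igraph_edgeD[OF G1] walk_edge by metis
    ultimately show ?thesis unfolding mem_torso_edges_iff by blast
  qed
  ultimately show ?thesis by auto
qed

lemma walk_glue_abstr_Cons:
  assumes e: "{a, b} \<in> edges (glue G1 G2)" and a: "a \<in> verts (glue (abstr_graph G1) G2)"
    and d: "d \<in> verts (glue (abstr_graph G1) G2)" "walk (glue (abstr_graph G1) G2) d c S2"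
    and b: "b = d \<or> walk G1 b d S1 \<and> S1 - {d} \<subseteq> inner_verts G1"
  shows "\<exists>T. walk (glue (abstr_graph G1) G2) a c T \<and> T \<subseteq> insert a S2"
proof (cases "b \<in> verts (glue (abstr_graph G1) G2)")
  case True
  then have "b = d" using b walk_verts(1)[of G1 b d S1] inner_verts_notin_right by auto
  then show ?thesis using walk.walk_Cons[OF edge_glue_abstr[OF e a True] a] d by blast
next
  case False
  then have "b \<in> inner_verts G1" "b \<noteq> d"
    using e d(1) is_igraph_edgeD[OF G1] is_igraph_edgeD(2)[OF G2, of a b] by auto
  then have S1: "walk G1 b d S1" "S1 - {d} \<subseteq> inner_verts G1" using b by auto
  have e1: "{a, b} \<in> edges G1"
    using e \<open>b \<in> inner_verts G1\<close> is_igraph_edgeD(2)[OF G2] inner_verts_notin_right by auto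
  then have "walk G1 a d (insert a S1)"
    using walk.walk_Cons[OF e1 _ S1(1)] is_igraph_edgeD[OF G1] by blast
  moreover have "a \<in> interface G1" "d \<in> interface G1"
    using a d(1) e1 is_igraph_edgeD[OF G1] walk_verts(2,3)[OF S1(1)]
      mem_interface_if_verts_glue_abstr
    by blast+
  ultimately have "a = d \<or> {a, d} \<in> torso_edges G1 (interface G1)"
    using S1(2) unfolding mem_torso_edges_iff by blast
  then have "a = d \<or> {a, d} \<in> edges (glue (abstr_graph G1) G2)" by auto
  then show ?thesis using d walk.walk_Cons[OF _ a d(2)] by blast
qed

(* Either a already lies in the abstracted gluing, or the walk starts with a detour in G1 from a
   through inner vertices of G1 to the first vertex d that does. *)
lemma walk_glue_imp_walk_glue_abstr:
  "walk (glue G1 G2) a c S \<Longrightarrow> c \<in> verts (glue (abstr_graph G1) G2) \<Longrightarrow>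
    \<exists>d S1 S2. d \<in> verts (glue (abstr_graph G1) G2) \<and> walk (glue (abstr_graph G1) G2) d c S2 \<and>
      S1 \<union> S2 \<subseteq> S \<and> (a = d \<or> walk G1 a d S1 \<and> S1 - {d} \<subseteq> inner_verts G1)"
proof (induction rule: walk.induct)
  case (walk_Nil a)
  then have "walk (glue (abstr_graph G1) G2) a a {a}" by (intro walk.walk_Nil)
  then show ?case using walk_Nil by blast
next
  case (walk_Cons a b c S)
  then obtain d S1 S2 where d: "d \<in> verts (glue (abstr_graph G1) G2)"
      "walk (glue (abstr_graph G1) G2) d c S2" "S1 \<union> S2 \<subseteq> S"
    and b: "b = d \<or> walk G1 b d S1 \<and> S1 - {d} \<subseteq> inner_verts G1" by blast
  have "b \<in> S" using walk_verts(1)[OF walk_Cons.hyps(3)] .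
  show ?case
  proof (cases "a \<in> inner_verts G1")
    case True
    then have e: "{a, b} \<in> edges G1"
      using walk_Cons.hyps(1) is_igraph_edgeD(1)[OF G2] inner_verts_notin_right by auto
    then have ab: "a \<in> verts G1" "b \<in> verts G1" using is_igraph_edgeD[OF G1] by blast+
    from b consider "b = d" | "walk G1 b d S1" "S1 - {d} \<subseteq> inner_verts G1" by blast
    then show ?thesis
    proof cases
      case 1
      then have "walk G1 a d {a, b}" using walk_edge[OF e ab] by simp
      then show ?thesis using d \<open>b \<in> S\<close> True 1
        by (intro exI[of _ d] exI[of _ "{a, b}"] exI[of _ S2]) auto
    next
      case 2
      then have "walk G1 a d (insert a S1)" using walk.walk_Cons[OF e ab(1)] by blast
      then show ?thesis using d 2 True
        by (intro exI[of _ d] exI[of _ "insert a S1"] exI[of _ S2]) auto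
    qed
  next
    case False
    then have a: "a \<in> verts (glue (abstr_graph G1) G2)" using walk_Cons.hyps(2) by auto
    then obtain T where "walk (glue (abstr_graph G1) G2) a c T" "T \<subseteq> insert a S"
      using walk_glue_abstr_Cons[OF walk_Cons.hyps(1) a d(1,2) b] d(3) by blast
    then show ?thesis using a by blast
  qed
qed

lemma walk_glue_abstr_imp_walk_glue:
  "walk (glue (abstr_graph G1) G2) a c S \<Longrightarrow> \<exists>T. walk (glue G1 G2) a c T \<and> T \<subseteq> S \<union> inner_verts G1"
proof (induction rule: walk.induct)
  case (walk_Nil a)
  then have "a \<in> verts (glue G1 G2)" using is_igraphD(3,4)[OF G1] by auto
  then have "walk (glue G1 G2) a a {a}" by (rule walk.walk_Nil)
  then show ?case by blast
next
  case (walk_Cons a b c S)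
  then obtain T where T: "walk (glue G1 G2) b c T" "T \<subseteq> S \<union> inner_verts G1" by blast
  have a: "a \<in> verts (glue G1 G2)" using walk_Cons.hyps(2) is_igraphD(3,4)[OF G1] by auto
  have "{a, b} \<in> torso_edges G1 (interface G1) \<or> {a, b} \<in> edges G2" using walk_Cons.hyps(1) by simp
  then obtain P where P: "walk (glue G1 G2) a b P" "P \<subseteq> {a, b} \<union> inner_verts G1"
  proof
    assume "{a, b} \<in> torso_edges G1 (interface G1)"
    then obtain P where "walk G1 a b P" "P \<inter> interface G1 \<subseteq> {a, b}"
      unfolding mem_torso_edges_iff by blast
    then show thesis using that[OF walk_mono] walk_verts(3) by fastforce
  next
    assume "{a, b} \<in> edges G2"
    then show thesis using that[of "{a, b}"] walk_edge is_igraph_edgeD[OF G2] by fastforce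
  qed
  then show ?case using walk_append[OF P(1) T(1)] T(2) walk_verts(1)[OF walk_Cons.hyps(3)] by blast
qed

lemma torso_edges_glue_abstr_graph:
  assumes "X \<subseteq> verts (glue (abstr_graph G1) G2)"
  shows "torso_edges (glue G1 G2) X = torso_edges (glue (abstr_graph G1) G2) X"
proof (rule torso_edges_eqI)
  fix x y assume xy: "x \<in> X" "y \<in> X"
  have "X \<inter> inner_verts G1 = {}" using assms inner_verts_notin_right by auto
  show "(\<exists>S. walk (glue G1 G2) x y S \<and> S \<inter> X \<subseteq> {x, y}) \<longleftrightarrow>
    (\<exists>S. walk (glue (abstr_graph G1) G2) x y S \<and> S \<inter> X \<subseteq> {x, y})"
  proof
    assume "\<exists>S. walk (glue G1 G2) x y S \<and> S \<inter> X \<subseteq> {x, y}"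
    then obtain S where S: "walk (glue G1 G2) x y S" "S \<inter> X \<subseteq> {x, y}" by blast
    obtain d S1 S2 where "d \<in> verts (glue (abstr_graph G1) G2)"
        "walk (glue (abstr_graph G1) G2) d y S2" "S1 \<union> S2 \<subseteq> S"
      and "x = d \<or> walk G1 x d S1 \<and> S1 - {d} \<subseteq> inner_verts G1"
      using walk_glue_imp_walk_glue_abstr[OF S(1)] assms xy(2) by blast
    moreover have "x \<notin> inner_verts G1" using xy(1) \<open>X \<inter> inner_verts G1 = {}\<close> by blast
    ultimately have "walk (glue (abstr_graph G1) G2) x y S2" "S2 \<subseteq> S"
      using walk_verts(1)[of G1 x d S1] by auto
    then show "\<exists>S. walk (glue (abstr_graph G1) G2) x y S \<and> S \<inter> X \<subseteq> {x, y}" using S(2) by blast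
  next
    assume "\<exists>S. walk (glue (abstr_graph G1) G2) x y S \<and> S \<inter> X \<subseteq> {x, y}"
    then obtain S where S: "walk (glue (abstr_graph G1) G2) x y S" "S \<inter> X \<subseteq> {x, y}" by blast
    obtain T where "walk (glue G1 G2) x y T" "T \<subseteq> S \<union> inner_verts G1"
      using walk_glue_abstr_imp_walk_glue[OF S(1)] by blast
    then show "\<exists>S. walk (glue G1 G2) x y S \<and> S \<inter> X \<subseteq> {x, y}"
      using S(2) \<open>X \<inter> inner_verts G1 = {}\<close> by blast
  qed
qed

lemma compatible_abstr_graph_left: "compatible (abstr_graph G1) G2"
proof -
  have overlap: "interface G1 \<inter> verts G2 = verts G1 \<inter> verts G2"
    using is_igraphD(3,4)[OF G1] compatible_Int_subset(1)[OF c] by blast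
  show ?thesis using c unfolding compatible_def Let_def abstr_graph_simps overlap .
qed

lemma igraph_iso_abstr_graph_glue_abstr:
  "igraph_iso id (abstr_graph (glue G1 G2)) (abstr_graph (glue (abstr_graph G1) G2))"
proof -
  have "lft G1 \<union> rgt G2 \<subseteq> verts (glue (abstr_graph G1) G2)" using is_igraphD(4)[OF G2] by auto
  then have edges: "torso_edges (glue G1 G2) (lft G1 \<union> rgt G2) =
      torso_edges (glue (abstr_graph G1) G2) (lft G1 \<union> rgt G2)"
    by (rule torso_edges_glue_abstr_graph)
  have "lab (glue (abstr_graph G1) G2) x = lab (glue G1 G2) x" if "x \<in> lft G1 \<union> rgt G2" for x
    using that is_igraphD(3,4)[OF G1] is_igraphD(4)[OF G2] compatible_Int_subset(1)[OF c]
    by (auto simp: glue_def)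
  then show ?thesis unfolding igraph_iso_def abstr_graph_simps glue_simps edges by simp
qed

end

section \<open>Abstraction and the semigroup operations\<close>

lemma abstr_oplus_abstr_left:
  assumes "I \<in> Ik k" and "J \<in> Ik k"
  shows "abstr k (oplus k (abstr k I) J) = abstr k (oplus k I J)"
proof -
  obtain G1 G2 where G1: "is_igraph k G1" and G2: "is_igraph k G2" and c: "compatible G1 G2"
    and I: "I = iclass k G1" and J: "J = iclass k G2"
    using compatible_representatives[OF assms] .
  note A1 = is_igraph_abstr_graph[OF G1] and cA = compatible_abstr_graph_left[OF G1 G2 c]
  note glue = is_igraph_glue[OF G1 G2 c]
  have "abstr k (oplus k (abstr k I) J) = iclass k (abstr_graph (glue (abstr_graph G1) G2))"
    unfolding I J abstr_iclass[OF G1] oplus_iclass[OF A1 G2 cA]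
    by (rule abstr_iclass[OF is_igraph_glue[OF A1 G2 cA]])
  also have "\<dots> = iclass k (abstr_graph (glue G1 G2))"
    using igraph_iso_abstr_graph_glue_abstr[OF G1 G2 c] iso_igraph_iff
      iclass_eq_if_iso[OF is_igraph_abstr_graph[OF glue]] by metis
  also have "\<dots> = abstr k (oplus k I J)"
    unfolding I J oplus_iclass[OF G1 G2 c] by (rule abstr_iclass[OF glue, symmetric])
  finally show ?thesis .
qed

lemma abstr_idem_Ak: "A \<in> Ak k \<Longrightarrow> abstr k A = A"
  unfolding Ak_def Ik_def
  using abstr_iclass is_igraph_abstr_graph abstr_graph_idem by fastforce

lemma Ak_subset_Ik: "Ak k \<subseteq> Ik k"
  unfolding Ak_def Ik_def using abstr_iclass is_igraph_abstr_graph by fastforce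

lemma oplus_in_Ik:
  assumes "I \<in> Ik k" "J \<in> Ik k"
  shows "oplus k I J \<in> Ik k"
proof -
  obtain G1 G2 where "is_igraph k G1" "is_igraph k G2" "compatible G1 G2"
    and "I = iclass k G1" "J = iclass k G2"
    using compatible_representatives[OF assms] .
  then show ?thesis using oplus_iclass is_igraph_glue unfolding Ik_def by blast
qed

lemma abstr_foldl_oplus:
  "I \<in> Ik k \<Longrightarrow> set Js \<subseteq> Ik k \<Longrightarrow> abstr k (foldl (oplus k) I Js) = foldl (boxplus k) (abstr k I) Js"
proof (induction Js arbitrary: I)
  case (Cons J Js)
  then have "abstr k (foldl (oplus k) I (J # Js)) = foldl (boxplus k) (abstr k (oplus k I J)) Js"
    using oplus_in_Ik by simp
  also have "\<dots> = foldl (boxplus k) (abstr k I) (J # Js)"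
    using abstr_oplus_abstr_left[of I k J] Cons.prems by (simp add: boxplus_def)
  finally show ?case .
qed simp

theorem lemma3p4:
  fixes k :: nat and w :: "nat igraph set list"
  assumes "k > 0"
    and "w \<noteq> []"
    and "set w \<subseteq> Ak k"
  shows "abstr k (foldl (oplus k) (hd w) (tl w)) = foldl (boxplus k) (hd w) (tl w)"
proof -
  obtain A As where w: "w = A # As" using assms(2) by (cases w) auto
  have A: "A \<in> Ak k" and As: "set As \<subseteq> Ik k" using assms(3) Ak_subset_Ik unfolding w by auto
  have "abstr k (foldl (oplus k) A As) = foldl (boxplus k) (abstr k A) As"
    using abstr_foldl_oplus[OF subsetD[OF Ak_subset_Ik A] As] .
  then show ?thesis unfolding w abstr_idem_Ak[OF A] by simp
qed

end
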